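(* Let $x,y,z$ be nodes of a finite, connected, unweighted, undirected graph, and suppose some node $c$ is a Condorcet winner for $\{x,y,z\}$. Then $c$ is the unique generalized median of $\{x,y,z\}$.
   Context: $d$ is the shortest-path distance. A node $c$ is a Condorcet winner for a set $S$ if for every other node $y'$, $\lvert\{u\in S: d(u,c)<d(u,y')\}\rvert > \lvert\{u\in S: d(u,y')<d(u,c)\}\rvert$. A generalized median of $\{x,y,z\}$ is a node minimizing $d(u,x)+d(u,y)+d(u,z)$ over all nodes $u$. *)

theory Defs
  imports Main
begin

definition is_walk :: "'a set \<Rightarrow> ('a \<Rightarrow> 'a \<Rightarrow> bool) \<Rightarrow> 'a list \<Rightarrow> bool" where
  "is_walk V E p \<longleftrightarrow> p \<noteq> [] \<and> set p \<subseteq> V \<and> (\<forall>i. Suc i < length p \<longrightarrow> E (p ! i) (p ! Suc i))"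

definition connected_graph :: "'a set \<Rightarrow> ('a \<Rightarrow> 'a \<Rightarrow> bool) \<Rightarrow> bool" where
  "connected_graph V E \<longleftrightarrow>
     finite V \<and> V \<noteq> {} \<and>
     (\<forall>u v. E u v \<longrightarrow> u \<in> V \<and> v \<in> V) \<and>
     (\<forall>u v. E u v \<longrightarrow> E v u) \<and>
     (\<forall>u. \<not> E u u) \<and>
     (\<forall>u\<in>V. \<forall>v\<in>V. \<exists>p. is_walk V E p \<and> hd p = u \<and> last p = v)"

definition gdist :: "'a set \<Rightarrow> ('a \<Rightarrow> 'a \<Rightarrow> bool) \<Rightarrow> 'a \<Rightarrow> 'a \<Rightarrow> nat" where
  "gdist V E u v = (LEAST n. \<exists>p. is_walk V E p \<and> hd p = u \<and> last p = v \<and> length p = Suc n)"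

definition condorcet_winner :: "'a set \<Rightarrow> ('a \<Rightarrow> 'a \<Rightarrow> bool) \<Rightarrow> 'a set \<Rightarrow> 'a \<Rightarrow> bool" where
  "condorcet_winner V E S c \<longleftrightarrow> c \<in> V \<and>
     (\<forall>y'\<in>V. y' \<noteq> c \<longrightarrow>
        card {u\<in>S. gdist V E u c < gdist V E u y'} > card {u\<in>S. gdist V E u y' < gdist V E u c})"

definition generalized_median :: "'a set \<Rightarrow> ('a \<Rightarrow> 'a \<Rightarrow> bool) \<Rightarrow> 'a \<Rightarrow> 'a \<Rightarrow> 'a \<Rightarrow> 'a \<Rightarrow> bool" where
  "generalized_median V E x y z m \<longleftrightarrow> m \<in> V \<and>
     (\<forall>u\<in>V. gdist V E m x + gdist V E m y + gdist V E m z
              \<le> gdist V E u x + gdist V E u y + gdist V E u z)"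

end

theory Submission
  imports Defs
begin

text \<open>For a triple, the total distance of any node m is at least half the perimeter
  d(x,y) + d(x,z) + d(y,z), with equality exactly when m lies on a shortest path between each
  pair. A Condorcet winner c lies on a shortest path between any two of the voters: otherwise
  the node at distance min(d(x,c), d(x,y)) from x along a shortest x-y path is weakly preferred
  to c by x and y and strictly by one of them, leaving c at most the single vote of z. Hence c
  attains the bound, and any other median has the same distances to x, y, z as c, so no voter
  strictly prefers c to it, contradicting that c is a Condorcet winner.\<close>

lemma is_walk_take: "is_walk V E p \<Longrightarrow> 0 < k \<Longrightarrow> is_walk V E (take k p)"
  unfolding is_walk_def by (auto dest: in_set_takeD)

lemma is_walk_drop: "is_walk V E p \<Longrightarrow> k < length p \<Longrightarrow> is_walk V E (drop k p)"
  unfolding is_walk_def by (auto dest: in_set_dropD simp: add.commute)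

lemma is_walk_rev:
  assumes sym: "\<forall>u v. E u v \<longrightarrow> E v u" and "is_walk V E p"
  shows "is_walk V E (rev p)"
  unfolding is_walk_def
proof (intro conjI allI impI)
  fix i assume i: "Suc i < length (rev p)"
  have "E (p ! (length p - Suc (Suc i))) (p ! Suc (length p - Suc (Suc i)))"
    using \<open>is_walk V E p\<close> i unfolding is_walk_def by auto
  moreover have "Suc (length p - Suc (Suc i)) = length p - Suc i" using i by auto
  ultimately show "E (rev p ! i) (rev p ! Suc i)" using sym i by (auto simp: rev_nth)
qed (use \<open>is_walk V E p\<close> in \<open>auto simp: is_walk_def\<close>)

lemma is_walk_append_tl:
  assumes p: "is_walk V E p" and q: "is_walk V E q" and pq: "last p = hd q"
  shows "is_walk V E (p @ tl q)"
  unfolding is_walk_def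
proof (intro conjI allI impI)
  fix i assume i: "Suc i < length (p @ tl q)"
  show "E ((p @ tl q) ! i) ((p @ tl q) ! Suc i)"
  proof (cases "Suc i < length p")
    case True thus ?thesis using p by (auto simp: is_walk_def nth_append)
  next
    case False
    define j where "j = Suc i - length p"
    have j: "Suc j < length q" "Suc i = length p + j"
      using False i p q unfolding j_def is_walk_def by auto
    have "(p @ tl q) ! i = q ! j"
    proof (cases "j = 0")
      case True
      hence "i = length p - 1" using j by auto
      thus ?thesis using True pq p q by (simp add: is_walk_def nth_append last_conv_nth hd_conv_nth)
    next
      case False
      hence "i - length p = j - 1" "\<not> i < length p" using j by auto
      thus ?thesis using j False by (auto simp: nth_append nth_tl)
    qed
    moreover have "(p @ tl q) ! Suc i = q ! Suc j" using j by (auto simp: nth_append nth_tl)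
    ultimately show ?thesis using j q by (auto simp: is_walk_def)
  qed
qed (use p q in \<open>auto simp: is_walk_def dest: list.set_sel(2)\<close>)

lemma last_append_tl: "q \<noteq> [] \<Longrightarrow> last p = hd q \<Longrightarrow> last (p @ tl q) = last q"
  by (cases q) (auto simp: last_append)

lemma gdist_le_walk:
  assumes "is_walk V E p" "hd p = u" "last p = v"
  shows "gdist V E u v \<le> length p - 1"
  unfolding gdist_def
proof (rule Least_le)
  have "length p = Suc (length p - 1)" using \<open>is_walk V E p\<close> by (auto simp: is_walk_def)
  thus "\<exists>p'. is_walk V E p' \<and> hd p' = u \<and> last p' = v \<and> length p' = Suc (length p - 1)"
    using assms by blast
qed

lemma shortest_walk_exists:
  assumes "connected_graph V E" "u \<in> V" "v \<in> V"
  obtains p where "is_walk V E p" "hd p = u" "last p = v" "length p = Suc (gdist V E u v)"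
proof -
  obtain p where p: "is_walk V E p" "hd p = u" "last p = v"
    using assms unfolding connected_graph_def by blast
  hence "length p = Suc (length p - 1)" by (auto simp: is_walk_def)
  hence "\<exists>n p. is_walk V E p \<and> hd p = u \<and> last p = v \<and> length p = Suc n" using p by blast
  from LeastI_ex[OF this] show ?thesis using that unfolding gdist_def by blast
qed

lemma condorcet_winner_eq_if_equidistant:
  assumes "condorcet_winner V E S c" "m \<in> V" "\<forall>u\<in>S. gdist V E u m = gdist V E u c"
  shows "m = c"
proof (rule ccontr)
  assume "m \<noteq> c"
  hence "card {u\<in>S. gdist V E u m < gdist V E u c} < card {u\<in>S. gdist V E u c < gdist V E u m}"
    using assms(1,2) unfolding condorcet_winner_def by blast
  moreover have "{u\<in>S. gdist V E u c < gdist V E u m} = {}" using assms(3) by auto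
  ultimately show False by simp
qed

context
  fixes V :: "'a set" and E :: "'a \<Rightarrow> 'a \<Rightarrow> bool"
  assumes G: "connected_graph V E"
begin

lemma gdist_commute: "u \<in> V \<Longrightarrow> v \<in> V \<Longrightarrow> gdist V E u v = gdist V E v u"
proof -
  have le: "gdist V E a b \<le> gdist V E b a" if "a \<in> V" "b \<in> V" for a b
  proof -
    obtain p where p: "is_walk V E p" "hd p = b" "last p = a" "length p = Suc (gdist V E b a)"
      using shortest_walk_exists[OF G \<open>b \<in> V\<close> \<open>a \<in> V\<close>] .
    have "is_walk V E (rev p)" using is_walk_rev p(1) G unfolding connected_graph_def by blast
    moreover have "hd (rev p) = a" "last (rev p) = b"
      using p by (auto simp: is_walk_def hd_rev last_rev)
    ultimately show ?thesis using gdist_le_walk[of V E "rev p" a b] p(4) by auto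
  qed
  assume "u \<in> V" "v \<in> V" thus ?thesis using le[of u v] le[of v u] by auto
qed

lemma gdist_triangle:
  assumes "u \<in> V" "v \<in> V" "w \<in> V"
  shows "gdist V E u w \<le> gdist V E u v + gdist V E v w"
proof -
  obtain p where p: "is_walk V E p" "hd p = u" "last p = v" "length p = Suc (gdist V E u v)"
    using shortest_walk_exists[OF G assms(1,2)] .
  obtain q where q: "is_walk V E q" "hd q = v" "last q = w" "length q = Suc (gdist V E v w)"
    using shortest_walk_exists[OF G assms(2,3)] .
  have "is_walk V E (p @ tl q)" using is_walk_append_tl[OF p(1) q(1)] p(3) q(2) by simp
  moreover have "hd (p @ tl q) = u" using p by (auto simp: is_walk_def)
  moreover have "last (p @ tl q) = w"
    using last_append_tl[of q p] p(3) q(1-3) by (auto simp: is_walk_def)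
  ultimately show ?thesis using gdist_le_walk[of V E "p @ tl q" u w] p(4) q(4) by auto
qed

lemma exists_between_at_gdist:
  assumes "u \<in> V" "v \<in> V" "k \<le> gdist V E u v"
  obtains w where "w \<in> V" "gdist V E u w = k" "gdist V E w v = gdist V E u v - k"
proof -
  obtain p where p: "is_walk V E p" "hd p = u" "last p = v" "length p = Suc (gdist V E u v)"
    using shortest_walk_exists[OF G assms(1,2)] .
  define w where "w = p ! k"
  have k: "k < length p" using p(4) assms(3) by auto
  have wV: "w \<in> V" using p(1) k unfolding w_def is_walk_def by auto
  have "hd (take (Suc k) p) = u" using p(2) by simp
  moreover have "last (take (Suc k) p) = w" using k by (simp add: w_def take_Suc_conv_app_nth)
  ultimately have "gdist V E u w \<le> k"
    using gdist_le_walk[OF is_walk_take[OF p(1)], of "Suc k"] k by auto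
  moreover have "gdist V E w v \<le> gdist V E u v - k"
    using gdist_le_walk[of V E "drop k p" w v] is_walk_drop[OF p(1) k] p k
    by (auto simp: w_def hd_drop_conv_nth)
  moreover have "gdist V E u v \<le> gdist V E u w + gdist V E w v"
    using gdist_triangle assms wV by blast
  ultimately show ?thesis using that wV assms(3) by auto
qed

lemma condorcet_winner_between:
  assumes "x \<in> V" "y \<in> V" "z \<in> V" and cw: "condorcet_winner V E {x, y, z} c"
  shows "gdist V E x c + gdist V E c y = gdist V E x y"
proof (rule ccontr)
  assume off_geodesic: "gdist V E x c + gdist V E c y \<noteq> gdist V E x y"
  have cV: "c \<in> V" using cw unfolding condorcet_winner_def by auto
  have tri: "gdist V E x y \<le> gdist V E x c + gdist V E c y"
    using gdist_triangle assms cV by blast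
  have yc: "gdist V E y c = gdist V E c y" using gdist_commute cV assms by blast
  define k where "k = min (gdist V E x c) (gdist V E x y)"
  obtain w where wV: "w \<in> V" and xw: "gdist V E x w = k"
    and wy: "gdist V E w y = gdist V E x y - k"
    using exists_between_at_gdist[OF assms(1,2), of k] unfolding k_def by auto
  have yw: "gdist V E y w = gdist V E x y - k" using wy gdist_commute wV assms by metis
  have weak: "gdist V E x w \<le> gdist V E x c" "gdist V E y w \<le> gdist V E y c"
    using xw yw k_def tri yc by auto
  have strict: "gdist V E x w < gdist V E x c \<or> gdist V E y w < gdist V E y c"
    using xw yw k_def tri yc off_geodesic by auto
  let ?pro = "{u\<in>{x,y,z}. gdist V E u c < gdist V E u w}"
  let ?con = "{u\<in>{x,y,z}. gdist V E u w < gdist V E u c}"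
  have "card ?con < card ?pro" using cw wV strict unfolding condorcet_winner_def by auto
  moreover have "?pro \<subseteq> {z}" using weak by auto
  hence "card ?pro \<le> 1" using card_mono[of "{z}" ?pro] by simp
  moreover have "?con \<noteq> {}" using strict by auto
  hence "1 \<le> card ?con" by (simp add: Suc_leI card_gt_0_iff)
  ultimately show False by linarith
qed

lemma gdist_le_via: "m \<in> V \<Longrightarrow> u \<in> V \<Longrightarrow> v \<in> V \<Longrightarrow> gdist V E u v \<le> gdist V E m u + gdist V E m v"
  using gdist_triangle gdist_commute by metis

lemma half_perimeter_le_total_gdist:
  assumes "m \<in> V" "x \<in> V" "y \<in> V" "z \<in> V"
  shows "gdist V E x y + gdist V E x z + gdist V E y z
           \<le> 2 * (gdist V E m x + gdist V E m y + gdist V E m z)"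
  using gdist_le_via[OF assms(1,2,3)] gdist_le_via[OF assms(1,2,4)] gdist_le_via[OF assms(1,3,4)]
  by simp

lemma total_gdist_eq_half_perimeterD:
  assumes "m \<in> V" "x \<in> V" "y \<in> V" "z \<in> V"
    and "gdist V E x y + gdist V E x z + gdist V E y z
           = 2 * (gdist V E m x + gdist V E m y + gdist V E m z)"
  shows "2 * gdist V E m x + gdist V E y z = gdist V E x y + gdist V E x z"
    and "2 * gdist V E m y + gdist V E x z = gdist V E x y + gdist V E y z"
    and "2 * gdist V E m z + gdist V E x y = gdist V E x z + gdist V E y z"
  using gdist_le_via[OF assms(1,2,3)] gdist_le_via[OF assms(1,2,4)] gdist_le_via[OF assms(1,3,4)]
    assms(5) by simp_all

lemma equidistant_if_total_gdist_eq_half_perimeter: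
  assumes "m \<in> V" "c \<in> V" "x \<in> V" "y \<in> V" "z \<in> V"
    and "gdist V E x y + gdist V E x z + gdist V E y z
           = 2 * (gdist V E m x + gdist V E m y + gdist V E m z)"
    and "gdist V E x y + gdist V E x z + gdist V E y z
           = 2 * (gdist V E c x + gdist V E c y + gdist V E c z)"
  shows "\<forall>u\<in>{x, y, z}. gdist V E u m = gdist V E u c"
proof
  fix u assume u: "u \<in> {x, y, z}"
  hence uV: "u \<in> V" using assms(3-5) by blast
  have "gdist V E m u = gdist V E c u"
    using u total_gdist_eq_half_perimeterD[OF assms(1,3-5,6)]
      total_gdist_eq_half_perimeterD[OF assms(2-5,7)] by auto
  thus "gdist V E u m = gdist V E u c"
    using gdist_commute[OF uV assms(1)] gdist_commute[OF uV assms(2)] by simp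
qed

end

theorem lemmaE2:
  fixes V :: "'a set" and E :: "'a \<Rightarrow> 'a \<Rightarrow> bool" and x y z c :: 'a
  assumes "connected_graph V E"
    and "x \<in> V" and "y \<in> V" and "z \<in> V"
    and "condorcet_winner V E {x, y, z} c"
  shows "generalized_median V E x y z c \<and> (\<forall>m. generalized_median V E x y z m \<longrightarrow> m = c)"
proof -
  note G = assms(1) and cw = assms(5)
  let ?total = "\<lambda>m. gdist V E m x + gdist V E m y + gdist V E m z"
  let ?perimeter = "gdist V E x y + gdist V E x z + gdist V E y z"
  have cV: "c \<in> V" using cw unfolding condorcet_winner_def by auto
  have "{y, x, z} = {x, y, z}" "{x, z, y} = {x, y, z}" "{y, z, x} = {x, y, z}" by auto
  hence "gdist V E x c + gdist V E c y = gdist V E x y"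
    "gdist V E x c + gdist V E c z = gdist V E x z"
    "gdist V E y c + gdist V E c z = gdist V E y z"
    using condorcet_winner_between[OF G] assms(2-4) cw by metis+
  hence c_tight: "?perimeter = 2 * ?total c" using gdist_commute[OF G] cV assms(2-4) by simp
  have c_median: "generalized_median V E x y z c"
    using half_perimeter_le_total_gdist[OF G] cV assms(2-4) c_tight
    unfolding generalized_median_def by fastforce
  moreover have "m = c" if m_median: "generalized_median V E x y z m" for m
  proof -
    have mV: "m \<in> V" using m_median unfolding generalized_median_def by blast
    have "?perimeter = 2 * ?total m"
      using m_median c_median half_perimeter_le_total_gdist[OF G mV assms(2-4)] c_tight cV mV
      unfolding generalized_median_def by (metis le_antisym mult_le_mono2)
    hence "\<forall>u\<in>{x, y, z}. gdist V E u m = gdist V E u c"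
      using equidistant_if_total_gdist_eq_half_perimeter[OF G mV cV assms(2-4) _ c_tight] by blast
    thus "m = c" using condorcet_winner_eq_if_equidistant[OF cw mV] by blast
  qed
  ultimately show ?thesis by blast
qed

end
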